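(* Let $A$ be a physical system with Hamiltonian $H^A=\sum_{x=1}^m a_x|x\rangle\langle x|$ with all $a_x\ge0$, let $\psi=|\psi\rangle\langle\psi|$ be a pure state on $A$, and let $\alpha\in(1/2,1)$. Then there exists a sequence of pure states $\{\chi_n\}_{n\in\mathbb{N}}$, $\chi_n$ a pure state on $A^n$, such that: (1) $\lim_{n\to\infty}\|\psi^{\otimes n}-\chi_n\|_1=0$; (2) $\chi_n$ can be expressed as a linear combination of no more than $(n+1)^m$ eigenvectors of $H^{A^n}$; (3) the energy spread of $\chi_n$ is at most $4n^\alpha\sum_{x=1}^m a_x$.
   Context: $A^n$ denotes $n$ copies of $A$ with total Hamiltonian $H^{A^n}=\sum_{i=1}^n I\otimes\cdots\otimes H^A\otimes\cdots\otimes I$ ($H^A$ in the $i$-th slot). The energy spread of a pure state on a system with Hamiltonian $H$ is the difference between the largest and smallest eigenvalues $\lambda$ of $H$ for which the state has nonzero component in the $\lambda$-eigenspace (i.e. the maximal minus minimal energy appearing when the state is written as a superposition of energy eigenvectors). *)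

theory Defs
  imports "Jordan_Normal_Form.Char_Poly" "HOL-Computational_Algebra.Polynomial"
begin

(* Complex finite-dimensional Hilbert spaces C^N are modelled by Jordan_Normal_Form
   vectors of dimension N; operators by N x N complex matrices.  The system A^n
   has dimension m^n. *)

definition cinner :: "complex vec \<Rightarrow> complex vec \<Rightarrow> complex" where
  "cinner u v = (\<Sum>i<dim_vec v. cnj (u $ i) * v $ i)"

definition unit_vec_c :: "nat \<Rightarrow> complex vec \<Rightarrow> bool" where
  "unit_vec_c N v \<longleftrightarrow> v \<in> carrier_vec N \<and> cinner v v = 1"

definition outer :: "complex vec \<Rightarrow> complex mat" where
  "outer v = mat (dim_vec v) (dim_vec v) (\<lambda>(i,j). v $ i * cnj (v $ j))"

definition adj :: "complex mat \<Rightarrow> complex mat" where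
  "adj X = mat (dim_col X) (dim_row X) (\<lambda>(i,j). cnj (X $$ (j,i)))"

definition kron :: "complex mat \<Rightarrow> complex mat \<Rightarrow> complex mat" where
  "kron X Y = mat (dim_row X * dim_row Y) (dim_col X * dim_col Y)
     (\<lambda>(i,j). X $$ (i div dim_row Y, j div dim_col Y) * Y $$ (i mod dim_row Y, j mod dim_col Y))"

primrec kron_pow :: "complex mat \<Rightarrow> nat \<Rightarrow> complex mat" where
  "kron_pow X 0 = 1\<^sub>m 1"
| "kron_pow X (Suc n) = kron (kron_pow X n) X"

definition ham_pow :: "nat \<Rightarrow> complex mat \<Rightarrow> nat \<Rightarrow> complex mat" where
  "ham_pow m H n = mat (m ^ n) (m ^ n) (\<lambda>(r,c).
     \<Sum>i<n. (kron (kron (1\<^sub>m (m ^ i)) H) (1\<^sub>m (m ^ (n - 1 - i)))) $$ (r,c))"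

(* trace norm ||X||_1 = tr sqrt(X^* X) = sum of singular values, i.e. the sum of the
   square roots of the eigenvalues (with algebraic multiplicity) of X^* X *)
definition trace_norm :: "complex mat \<Rightarrow> real" where
  "trace_norm X = sum_mset (image_mset (\<lambda>l. sqrt (cmod l)) (proots (char_poly (adj X * X))))"

definition energies_in :: "complex mat \<Rightarrow> complex vec \<Rightarrow> real set" where
  "energies_in H v = {Re k | k. \<exists>u. eigenvector H u k \<and> cinner u v \<noteq> 0}"

definition energy_spread :: "complex mat \<Rightarrow> complex vec \<Rightarrow> real" where
  "energy_spread H v = Max (energies_in H v) - Min (energies_in H v)"

end

theory Submission
  imports Defs "Jordan_Normal_Form.Schur_Decomposition"
begin

(*
  Write the basis states of A^n as base-m numbers r with digits x_1 ... x_n. In psi^(tensor n) the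
  state r has weight |psi x_1|^2 ... |psi x_n|^2 and energy a x_1 + ... + a x_n, so under these
  weights the energy is a sum of n independent copies of a variable with mean mu and variance at
  most (sum a)^2. Keep only the typical states, whose energy is within n^alpha * sum a of n * mu,
  and renormalise. By Chebyshev the discarded weight w is at most n^(1 - 2 alpha), which tends to 0,
  and the trace distance of the two pure states is 2 sqrt w. The energy of a basis state depends
  only on its type (how often each level occurs), so at most (n + 1)^m energies occur, and the
  projections onto their eigenspaces decompose the truncated state into that many eigenvectors.
*)

section \<open>Trace norm of a difference of pure states\<close>

lemma index_mult_mat_sum:
  assumes "A \<in> carrier_mat n k" "B \<in> carrier_mat k n'" "i < n" "j < n'"
  shows "(A * B) $$ (i, j) = (\<Sum>l<k. A $$ (i, l) * B $$ (l, j))"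
  using assms by (auto simp: scalar_prod_def atLeast0LessThan intro!: sum.cong)

definition mat_trace :: "'a :: comm_ring_1 mat \<Rightarrow> 'a" where
  "mat_trace A = (\<Sum>i<dim_row A. A $$ (i, i))"

lemma mat_trace_mult_comm:
  assumes "A \<in> carrier_mat n k" "B \<in> carrier_mat k n"
  shows "mat_trace (A * B) = mat_trace (B * A)"
proof -
  have "mat_trace (A * B) = (\<Sum>i<n. \<Sum>j<k. A $$ (i, j) * B $$ (j, i))"
    using assms by (auto simp: mat_trace_def scalar_prod_def atLeast0LessThan intro!: sum.cong)
  also have "\<dots> = (\<Sum>j<k. \<Sum>i<n. B $$ (j, i) * A $$ (i, j))"
    by (subst sum.swap) (simp add: mult.commute)
  also have "\<dots> = mat_trace (B * A)"
    using assms by (auto simp: mat_trace_def scalar_prod_def atLeast0LessThan intro!: sum.cong)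
  finally show ?thesis .
qed

lemma proots_prod_linear_factors: "proots (\<Prod>a\<leftarrow>as. [:- a, 1:]) = mset (as :: 'a :: idom list)"
proof (induction as)
  case (Cons a as)
  have "(\<Prod>a\<leftarrow>as. [:- a, 1:]) \<noteq> 0"
    by (auto simp: prod_list_zero_iff)
  then have "proots ([:- a, 1:] * (\<Prod>a\<leftarrow>as. [:- a, 1:])) = proots [:- a, 1:] + mset as"
    using Cons by (subst proots_mult) auto
  then show ?case
    by simp
qed simp

lemma sum_proots_char_poly:
  assumes A: "(A :: complex mat) \<in> carrier_mat n n"
  shows "sum_mset (proots (char_poly A)) = mat_trace A"
proof -
  obtain es where es: "char_poly A = (\<Prod>a\<leftarrow>es. [:- a, 1:])"
    using char_poly_factorized[OF A] by blast
  obtain B P Q where schur: "schur_decomposition A es = (B, P, Q)"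
    by (cases "schur_decomposition A es") auto
  from schur_decomposition[OF A es schur] have sim: "similar_mat_wit A B P Q" and diag: "diag_mat B = es"
    by auto
  from sim A have C: "P \<in> carrier_mat n n" "B \<in> carrier_mat n n" "Q \<in> carrier_mat n n"
    and QP: "Q * P = 1\<^sub>m n" and APBQ: "A = P * B * Q"
    unfolding similar_mat_wit_def Let_def by auto
  have "sum_mset (proots (char_poly A)) = sum_list es"
    unfolding es proots_prod_linear_factors by (simp add: sum_mset_sum_list)
  also have "\<dots> = mat_trace B"
    using C diag by (auto simp: mat_trace_def diag_mat_def sum_list_sum_nth atLeast0LessThan)
  also have "\<dots> = mat_trace ((Q * P) * B)"
    using C QP by simp
  also have "\<dots> = mat_trace (Q * (P * B))"
    using C by simp
  also have "\<dots> = mat_trace (P * B * Q)"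
    using C by (intro mat_trace_mult_comm) auto
  finally show ?thesis
    using APBQ by simp
qed

lemma proots_char_poly_scaled_idempotent:
  assumes A: "(A :: 'a :: field mat) \<in> carrier_mat n n" and idem: "A * A = s \<cdot>\<^sub>m A"
    and x: "x \<in># proots (char_poly A)"
  shows "x = 0 \<or> x = s"
proof -
  have "char_poly A \<noteq> 0"
    using degree_monic_char_poly[OF A] by auto
  then have "eigenvalue A x"
    using x eigenvalue_root_char_poly[OF A] by simp
  then obtain v where v: "v \<in> carrier_vec n" "v \<noteq> 0\<^sub>v n" and Av: "A *\<^sub>v v = x \<cdot>\<^sub>v v"
    using A unfolding eigenvalue_def eigenvector_def by auto
  have "(x * x) \<cdot>\<^sub>v v = (A * A) *\<^sub>v v"
    using A v Av by (simp add: mult_mat_vec smult_smult_assoc)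
  also have "\<dots> = s \<cdot>\<^sub>v (A *\<^sub>v v)"
    using A v idem by auto
  also have "\<dots> = (s * x) \<cdot>\<^sub>v v"
    using Av by (simp add: smult_smult_assoc)
  finally have eq: "(x * x) \<cdot>\<^sub>v v = (s * x) \<cdot>\<^sub>v v" .
  obtain i where i: "i < n" "v $ i \<noteq> 0"
    using v by (metis eq_vecI carrier_vecD index_zero_vec)
  have "x * x * v $ i = s * x * v $ i"
    using arg_cong[OF eq, of "\<lambda>u. u $ i"] i v by simp
  then have "x * x = s * x"
    using i by simp
  then show ?thesis
    by (metis mult_cancel_right mult_zero_right)
qed

lemma trace_norm_scaled_idempotent:
  assumes M: "adj X * X \<in> carrier_mat n n"
    and idem: "(adj X * X) * (adj X * X) = complex_of_real s \<cdot>\<^sub>m (adj X * X)"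
    and trace: "mat_trace (adj X * X) = complex_of_real (c * s)"
  shows "trace_norm X = c * sqrt \<bar>s\<bar>"
proof -
  define R where "R = proots (char_poly (adj X * X))"
  define k where "k = count R (complex_of_real s)"
  have R: "l = 0 \<or> l = complex_of_real s" if "l \<in># R" for l
    using proots_char_poly_scaled_idempotent[OF M idem] that unfolding R_def by blast
  have "sum_mset R = sum_mset (image_mset (\<lambda>l. if l = complex_of_real s then complex_of_real s else 0) R)"
    using R by (induction R) auto
  then have "mat_trace (adj X * X) = complex_of_real s * of_nat k"
    unfolding R_def k_def sum_proots_char_poly[OF M] by (simp add: sum_mset_delta)
  then have ck: "c * s = s * k"
    unfolding trace by (metis of_real_eq_iff of_real_mult of_real_of_nat_eq)
  have "trace_norm X = sum_mset (image_mset (\<lambda>l. if l = complex_of_real s then sqrt \<bar>s\<bar> else 0) R)"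
    unfolding trace_norm_def R_def[symmetric] using R by (induction R) auto
  also have "\<dots> = k * sqrt \<bar>s\<bar>"
    by (simp add: sum_mset_delta k_def)
  also have "\<dots> = c * sqrt \<bar>s\<bar>"
    using ck by (cases "s = 0") auto
  finally show ?thesis .
qed

lemma cinner_self_eq: "cinner v v = complex_of_real (\<Sum>i<dim_vec v. (cmod (v $ i))\<^sup>2)"
  unfolding cinner_def of_real_sum by (intro sum.cong refl) (metis complex_norm_square mult.commute)

lemma unit_vec_c_nonzero: "unit_vec_c N v \<Longrightarrow> v \<noteq> 0\<^sub>v N"
  by (auto simp: unit_vec_c_def cinner_def)

(* X^3 = s X confines the eigenvalues of X^2 to {0, s}, and trace (X^2) = 2 s fixes their count. *)
context
  fixes N :: nat and u v :: "complex vec" and X :: "complex mat"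
  assumes u: "unit_vec_c N u" and v: "unit_vec_c N v" and X: "X = outer u - outer v"
begin

lemma outer_diff_carrier: "X \<in> carrier_mat N N"
  using u v unfolding X by (auto simp: unit_vec_c_def outer_def)

lemma outer_diff_entry: "i < N \<Longrightarrow> j < N \<Longrightarrow> X $$ (i, j) = u $ i * cnj (u $ j) - v $ i * cnj (v $ j)"
  using u v unfolding X by (auto simp: unit_vec_c_def outer_def)

lemma adj_outer_diff: "adj X = X"
  by (rule eq_matI) (use outer_diff_carrier outer_diff_entry in \<open>auto simp: adj_def\<close>)

lemma sums_cnj_mult:
  "(\<Sum>k<N. cnj (u $ k) * u $ k) = 1" "(\<Sum>k<N. cnj (v $ k) * v $ k) = 1"
  "(\<Sum>k<N. cnj (u $ k) * v $ k) = cinner u v" "(\<Sum>k<N. cnj (v $ k) * u $ k) = cnj (cinner u v)"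
  using u v by (auto simp: unit_vec_c_def cinner_def cnj_sum mult.commute)

lemma one_minus_cmod_cinner_sq:
  "complex_of_real (1 - (cmod (cinner u v))\<^sup>2) = 1 - cinner u v * cnj (cinner u v)"
  by (simp add: complex_norm_square[symmetric])

lemma outer_diff_square_entry:
  assumes "i < N" "j < N"
  shows "(X * X) $$ (i, j) = u $ i * cnj (u $ j) + v $ i * cnj (v $ j)
    - cinner u v * u $ i * cnj (v $ j) - cnj (cinner u v) * v $ i * cnj (u $ j)"
proof -
  have "(X * X) $$ (i, j) = (\<Sum>k<N. X $$ (i, k) * X $$ (k, j))"
    using outer_diff_carrier assms by (intro index_mult_mat_sum) auto
  also have "\<dots> = (\<Sum>k<N. u $ i * cnj (u $ j) * (cnj (u $ k) * u $ k)
      - u $ i * cnj (v $ j) * (cnj (u $ k) * v $ k) - v $ i * cnj (u $ j) * (cnj (v $ k) * u $ k)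
      + v $ i * cnj (v $ j) * (cnj (v $ k) * v $ k))"
    using assms by (intro sum.cong refl) (simp add: outer_diff_entry algebra_simps)
  also have "\<dots> = u $ i * cnj (u $ j) + v $ i * cnj (v $ j)
      - cinner u v * u $ i * cnj (v $ j) - cnj (cinner u v) * v $ i * cnj (u $ j)"
    by (simp add: sum.distrib sum_subtractf sums_cnj_mult flip: sum_distrib_left)
  finally show ?thesis .
qed

lemma outer_diff_cube: "X * X * X = complex_of_real (1 - (cmod (cinner u v))\<^sup>2) \<cdot>\<^sub>m X"
proof (rule eq_matI)
  define c where "c = cinner u v"
  fix i j assume "i < dim_row (complex_of_real (1 - (cmod c)\<^sup>2) \<cdot>\<^sub>m X)"
    "j < dim_col (complex_of_real (1 - (cmod c)\<^sup>2) \<cdot>\<^sub>m X)"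
  then have ij: "i < N" "j < N"
    using outer_diff_carrier by auto
  have "(X * X * X) $$ (i, j) = (\<Sum>k<N. (X * X) $$ (i, k) * X $$ (k, j))"
    using outer_diff_carrier ij by (intro index_mult_mat_sum) auto
  also have "\<dots> = (\<Sum>k<N. (u $ i * cnj (u $ j) - cnj c * v $ i * cnj (u $ j)) * (cnj (u $ k) * u $ k)
      + (- u $ i * cnj (v $ j) + cnj c * v $ i * cnj (v $ j)) * (cnj (u $ k) * v $ k)
      + (v $ i * cnj (u $ j) - c * u $ i * cnj (u $ j)) * (cnj (v $ k) * u $ k)
      + (- v $ i * cnj (v $ j) + c * u $ i * cnj (v $ j)) * (cnj (v $ k) * v $ k))"
    using ij by (intro sum.cong refl) (simp add: outer_diff_entry outer_diff_square_entry c_def algebra_simps)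
  also have "\<dots> = complex_of_real (1 - (cmod c)\<^sup>2) * X $$ (i, j)"
    unfolding c_def one_minus_cmod_cinner_sq outer_diff_entry[OF ij]
    by (simp only: sum.distrib sums_cnj_mult flip: sum_distrib_left) (simp add: algebra_simps)
  finally show "(X * X * X) $$ (i, j) = (complex_of_real (1 - (cmod c)\<^sup>2) \<cdot>\<^sub>m X) $$ (i, j)"
    using ij outer_diff_carrier by simp
qed (use outer_diff_carrier in auto)

lemma mat_trace_outer_diff_square:
  "mat_trace (X * X) = complex_of_real (2 * (1 - (cmod (cinner u v))\<^sup>2))"
proof -
  have "mat_trace (X * X) = (\<Sum>k<N. (X * X) $$ (k, k))"
    unfolding mat_trace_def using outer_diff_carrier by simp
  also have "\<dots> = (\<Sum>k<N. cnj (u $ k) * u $ k - cinner u v * (cnj (v $ k) * u $ k)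
      - cnj (cinner u v) * (cnj (u $ k) * v $ k) + cnj (v $ k) * v $ k)"
    by (intro sum.cong refl) (simp add: outer_diff_square_entry algebra_simps)
  also have "\<dots> = complex_of_real (2 * (1 - (cmod (cinner u v))\<^sup>2))"
    unfolding of_real_mult one_minus_cmod_cinner_sq
    by (simp add: sum.distrib sum_subtractf sums_cnj_mult flip: sum_distrib_left)
  finally show ?thesis .
qed

end

lemma trace_norm_outer_diff:
  assumes u: "unit_vec_c N u" and v: "unit_vec_c N v"
  shows "trace_norm (outer u - outer v) = 2 * sqrt \<bar>1 - (cmod (cinner u v))\<^sup>2\<bar>"
proof (rule trace_norm_scaled_idempotent)
  let ?X = "outer u - outer v"
  note X = outer_diff_carrier[OF u v refl] adj_outer_diff[OF u v refl]
  show "adj ?X * ?X \<in> carrier_mat N N"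
    using X by simp
  have "?X * ?X * (?X * ?X) = ?X * ?X * ?X * ?X"
    using X by (simp add: assoc_mult_mat[of _ N N _ N _ N])
  also have "\<dots> = complex_of_real (1 - (cmod (cinner u v))\<^sup>2) \<cdot>\<^sub>m (?X * ?X)"
    unfolding outer_diff_cube[OF u v refl] using X by (simp add: mult_smult_assoc_mat)
  finally show "adj ?X * ?X * (adj ?X * ?X) = complex_of_real (1 - (cmod (cinner u v))\<^sup>2) \<cdot>\<^sub>m (adj ?X * ?X)"
    unfolding X(2) .
  show "mat_trace (adj ?X * ?X) = complex_of_real (2 * (1 - (cmod (cinner u v))\<^sup>2))"
    unfolding X(2) by (rule mat_trace_outer_diff_square[OF u v refl])
qed

section \<open>Diagonal Hamiltonians\<close>

definition diag_real_mat :: "nat \<Rightarrow> (nat \<Rightarrow> real) \<Rightarrow> complex mat" where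
  "diag_real_mat N D = mat N N (\<lambda>(r, c). if r = c then complex_of_real (D r) else 0)"

lemma diag_real_mat_carrier [simp]: "diag_real_mat N D \<in> carrier_mat N N"
  and dim_row_diag_real_mat [simp]: "dim_row (diag_real_mat N D) = N"
  and dim_col_diag_real_mat [simp]: "dim_col (diag_real_mat N D) = N"
  by (simp_all add: diag_real_mat_def)

lemma diag_real_mat_mult_vec:
  assumes "u \<in> carrier_vec N" "r < N"
  shows "(diag_real_mat N D *\<^sub>v u) $ r = complex_of_real (D r) * u $ r"
proof -
  have "(diag_real_mat N D *\<^sub>v u) $ r = (\<Sum>j<N. (if r = j then complex_of_real (D r) else 0) * u $ j)"
    using assms by (auto simp: diag_real_mat_def scalar_prod_def atLeast0LessThan intro!: sum.cong)
  also have "\<dots> = (\<Sum>j<N. if r = j then complex_of_real (D r) * u $ r else 0)"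
    by (intro sum.cong) auto
  finally show ?thesis
    using assms(2) by simp
qed

lemma eigenvector_diag_real_mat_eigenvalue:
  assumes "eigenvector (diag_real_mat N D) u k" "r < N" "u $ r \<noteq> 0"
  shows "k = complex_of_real (D r)"
proof -
  have u: "u \<in> carrier_vec N" and eigen: "diag_real_mat N D *\<^sub>v u = k \<cdot>\<^sub>v u"
    using assms(1) unfolding eigenvector_def by auto
  have "complex_of_real (D r) * u $ r = (diag_real_mat N D *\<^sub>v u) $ r"
    using diag_real_mat_mult_vec[OF u assms(2)] by simp
  also have "\<dots> = k * u $ r"
    unfolding eigen using u assms(2) by simp
  finally show ?thesis
    using assms(3) by simp
qed

lemma eigenvector_diag_real_mat_supported:
  assumes u: "u \<in> carrier_vec N" "u \<noteq> 0\<^sub>v N" and supp: "\<And>r. r < N \<Longrightarrow> u $ r \<noteq> 0 \<Longrightarrow> D r = t"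
  shows "eigenvector (diag_real_mat N D) u (complex_of_real t)"
  unfolding eigenvector_def
proof (intro conjI)
  show "diag_real_mat N D *\<^sub>v u = complex_of_real t \<cdot>\<^sub>v u"
  proof (rule eq_vecI)
    fix r assume "r < dim_vec (complex_of_real t \<cdot>\<^sub>v u)"
    then have "r < N"
      using u by simp
    then show "(diag_real_mat N D *\<^sub>v u) $ r = (complex_of_real t \<cdot>\<^sub>v u) $ r"
      using diag_real_mat_mult_vec[OF u(1)] supp u(1) by (cases "u $ r = 0") auto
  qed (use u in auto)
qed (use u in auto)

lemma energies_in_diag_real_mat:
  assumes v: "v \<in> carrier_vec N"
  shows "energies_in (diag_real_mat N D) v = D ` {r. r < N \<and> v $ r \<noteq> 0}"
proof
  show "energies_in (diag_real_mat N D) v \<subseteq> D ` {r. r < N \<and> v $ r \<noteq> 0}"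
  proof
    fix t assume "t \<in> energies_in (diag_real_mat N D) v"
    then obtain k u where t: "t = Re k" and ev: "eigenvector (diag_real_mat N D) u k"
      and "cinner u v \<noteq> 0"
      unfolding energies_in_def by auto
    then have "(\<Sum>i<N. cnj (u $ i) * v $ i) \<noteq> 0"
      using v by (simp add: cinner_def)
    then obtain r where r: "r < N" "cnj (u $ r) * v $ r \<noteq> 0"
      by (rule sum.not_neutral_contains_not_neutral) auto
    then have "k = complex_of_real (D r)"
      by (intro eigenvector_diag_real_mat_eigenvalue[OF ev]) auto
    then show "t \<in> D ` {r. r < N \<and> v $ r \<noteq> 0}"
      using r t by auto
  qed
next
  show "D ` {r. r < N \<and> v $ r \<noteq> 0} \<subseteq> energies_in (diag_real_mat N D) v"
  proof clarify
    fix r assume r: "r < N" "v $ r \<noteq> 0"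
    have "unit_vec N r \<noteq> (0\<^sub>v N :: complex vec)"
      using r by (metis index_unit_vec(1) index_zero_vec(1) zero_neq_one)
    then have "eigenvector (diag_real_mat N D) (unit_vec N r) (complex_of_real (D r))"
      by (intro eigenvector_diag_real_mat_supported) (auto simp: r split: if_splits)
    moreover have "cinner (unit_vec N r) v = (\<Sum>i<N. if i = r then v $ r else 0)"
      unfolding cinner_def using v r by (intro sum.cong) auto
    moreover have "\<dots> = v $ r"
      using r by simp
    ultimately show "D r \<in> energies_in (diag_real_mat N D) v"
      unfolding energies_in_def using r by (auto intro!: exI[of _ "complex_of_real (D r)"])
  qed
qed

lemma energy_spread_diag_real_mat_le:
  assumes v: "v \<in> carrier_vec N" "v \<noteq> 0\<^sub>v N"
    and bound: "\<And>r. r < N \<Longrightarrow> v $ r \<noteq> 0 \<Longrightarrow> \<bar>D r - c\<bar> \<le> b"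
  shows "energy_spread (diag_real_mat N D) v \<le> 2 * b"
proof -
  define E where "E = D ` {r. r < N \<and> v $ r \<noteq> 0}"
  have "finite E" "E \<noteq> {}"
    unfolding E_def using v by (auto intro: eq_vecI)
  moreover have "\<bar>t - c\<bar> \<le> b" if "t \<in> E" for t
    using that bound unfolding E_def by auto
  ultimately have "\<bar>Max E - c\<bar> \<le> b" "\<bar>Min E - c\<bar> \<le> b"
    by (simp_all add: Max_in Min_in)
  then show ?thesis
    unfolding energy_spread_def energies_in_diag_real_mat[OF v(1)] E_def[symmetric] by simp
qed

lemma diag_real_mat_eigenvector_decomposition:
  assumes v: "v \<in> carrier_vec N" and vals: "\<And>r. r < N \<Longrightarrow> D r \<in> T" and "finite T"
  shows "\<exists>k e c. k \<le> card T \<and> (\<forall>j<k. \<exists>ev. eigenvector (diag_real_mat N D) (e j) ev) \<and>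
          (\<forall>i<N. v $ i = (\<Sum>j<k. c j * e j $ i))"
proof -
  define V where "V = D ` {r. r < N \<and> v $ r \<noteq> 0}"
  have "finite V"
    unfolding V_def by simp
  define ts where "ts = sorted_list_of_set V"
  have ts: "set ts = V" "distinct ts"
    unfolding ts_def using \<open>finite V\<close> by auto
  define k where "k = length ts"
  have "V \<subseteq> T"
    unfolding V_def using vals by auto
  moreover have "k = card V"
    unfolding k_def using distinct_card[OF ts(2)] ts(1) by simp
  ultimately have "k \<le> card T"
    using card_mono[OF \<open>finite T\<close>] by simp
  define e where "e j = vec N (\<lambda>r. if D r = ts ! j then v $ r else 0)" for j
  have "eigenvector (diag_real_mat N D) (e j) (complex_of_real (ts ! j))" if "j < k" for j
  proof (rule eigenvector_diag_real_mat_supported)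
    have "ts ! j \<in> V"
      using that ts unfolding k_def by (metis nth_mem)
    then obtain r where "r < N" "v $ r \<noteq> 0" "D r = ts ! j"
      unfolding V_def by auto
    then have "e j $ r \<noteq> 0\<^sub>v N $ r"
      by (simp add: e_def)
    then show "e j \<noteq> 0\<^sub>v N"
      by metis
  qed (auto simp: e_def split: if_splits)
  moreover have "v $ i = (\<Sum>j<k. 1 * e j $ i)" if i: "i < N" for i
  proof -
    have "(\<Sum>j<k. 1 * e j $ i) = (\<Sum>t\<leftarrow>ts. if t = D i then v $ i else 0)"
      using i by (auto simp: e_def sum_list_sum_nth k_def atLeast0LessThan intro!: sum.cong)
    also have "\<dots> = (\<Sum>t\<in>V. if t = D i then v $ i else 0)"
      using ts by (simp add: sum_list_distinct_conv_sum_set)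
    also have "\<dots> = v $ i"
      using \<open>finite V\<close> i by (auto simp: V_def)
    finally show ?thesis ..
  qed
  ultimately show ?thesis
    using \<open>k \<le> card T\<close> by (intro exI[of _ k] exI[of _ e] exI[of _ "\<lambda>_. 1"]) blast
qed

section \<open>Tensor powers\<close>

definition kron_vec :: "complex vec \<Rightarrow> complex vec \<Rightarrow> complex vec" where
  "kron_vec x y = vec (dim_vec x * dim_vec y) (\<lambda>i. x $ (i div dim_vec y) * y $ (i mod dim_vec y))"

primrec kron_vec_pow :: "complex vec \<Rightarrow> nat \<Rightarrow> complex vec" where
  "kron_vec_pow v 0 = vec 1 (\<lambda>_. 1)"
| "kron_vec_pow v (Suc n) = kron_vec (kron_vec_pow v n) v"

lemma dim_kron_vec_pow [simp]: "dim_vec (kron_vec_pow v n) = dim_vec v ^ n"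
  by (induction n) (auto simp: kron_vec_def mult.commute)

lemma kron_vec_pow_Suc_index:
  "r < dim_vec v ^ Suc n \<Longrightarrow>
    kron_vec_pow v (Suc n) $ r = kron_vec_pow v n $ (r div dim_vec v) * v $ (r mod dim_vec v)"
  by (simp add: kron_vec_def mult.commute)

lemma kron_outer:
  assumes "dim_vec y > 0"
  shows "kron (outer x) (outer y) = outer (kron_vec x y)"
proof (rule eq_matI)
  fix i j assume "i < dim_row (outer (kron_vec x y))" "j < dim_col (outer (kron_vec x y))"
  then have ij: "i < dim_vec x * dim_vec y" "j < dim_vec x * dim_vec y"
    by (auto simp: outer_def kron_vec_def)
  then have "i div dim_vec y < dim_vec x" "j div dim_vec y < dim_vec x"
    by (auto simp: less_mult_imp_div_less)
  moreover have "i mod dim_vec y < dim_vec y" "j mod dim_vec y < dim_vec y"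
    using assms by auto
  ultimately show "kron (outer x) (outer y) $$ (i, j) = outer (kron_vec x y) $$ (i, j)"
    using ij by (simp add: kron_def outer_def kron_vec_def)
qed (auto simp: kron_def outer_def kron_vec_def)

lemma kron_pow_outer:
  assumes "dim_vec v > 0"
  shows "kron_pow (outer v) n = outer (kron_vec_pow v n)"
proof (induction n)
  case 0
  show ?case
    by (rule eq_matI) (auto simp: outer_def)
next
  case (Suc n)
  then show ?case
    using kron_outer[OF assms] by simp
qed

lemma kron_diag_real_mat:
  "kron (diag_real_mat N1 D1) (diag_real_mat N2 D2) =
    diag_real_mat (N1 * N2) (\<lambda>r. D1 (r div N2) * D2 (r mod N2))"
proof (rule eq_matI)
  fix r c assume "r < dim_row (diag_real_mat (N1 * N2) (\<lambda>r. D1 (r div N2) * D2 (r mod N2)))"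
    "c < dim_col (diag_real_mat (N1 * N2) (\<lambda>r. D1 (r div N2) * D2 (r mod N2)))"
  then have rc: "r < N1 * N2" "c < N1 * N2"
    by simp_all
  then have "N2 > 0"
    by (cases N2) auto
  with rc have "r div N2 < N1" "c div N2 < N1" "r mod N2 < N2" "c mod N2 < N2"
    by (auto simp: less_mult_imp_div_less)
  moreover have "r = c \<longleftrightarrow> r div N2 = c div N2 \<and> r mod N2 = c mod N2"
    by (metis div_mult_mod_eq)
  ultimately show "kron (diag_real_mat N1 D1) (diag_real_mat N2 D2) $$ (r, c) =
      diag_real_mat (N1 * N2) (\<lambda>r. D1 (r div N2) * D2 (r mod N2)) $$ (r, c)"
    using rc by (auto simp: kron_def diag_real_mat_def)
qed (simp_all add: kron_def)

lemma one_mat_eq_diag_real_mat: "1\<^sub>m N = diag_real_mat N (\<lambda>_. 1)"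
  by (rule eq_matI) (simp_all add: diag_real_mat_def)

(* Kronecker products put the last tensor factor in the least significant base-m digit, so digit j
   of r is the level of factor n - j; the slot order is irrelevant for the total energy. *)
definition basis_energy :: "nat \<Rightarrow> (nat \<Rightarrow> real) \<Rightarrow> nat \<Rightarrow> nat \<Rightarrow> real" where
  "basis_energy m a n r = (\<Sum>j<n. a ((r div m ^ j) mod m))"

lemma basis_energy_0 [simp]: "basis_energy m a 0 r = 0"
  by (simp add: basis_energy_def)

lemma basis_energy_Suc: "basis_energy m a (Suc n) r = a (r mod m) + basis_energy m a n (r div m)"
  unfolding basis_energy_def sum.lessThan_Suc_shift by (simp add: div_mult2_eq)

lemma ham_pow_diag_real_mat:
  assumes "m > 0"
  shows "ham_pow m (diag_real_mat m a) n = diag_real_mat (m ^ n) (basis_energy m a n)"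
proof (rule eq_matI)
  have slot: "kron (kron (1\<^sub>m (m ^ i)) (diag_real_mat m a)) (1\<^sub>m (m ^ (n - 1 - i))) =
      diag_real_mat (m ^ n) (\<lambda>r. a ((r div m ^ (n - 1 - i)) mod m))" if "i < n" for i
  proof -
    have "m ^ i * m * m ^ (n - 1 - i) = m ^ (i + 1 + (n - 1 - i))"
      by (simp add: power_add)
    also have "i + 1 + (n - 1 - i) = n"
      using that by simp
    finally show ?thesis
      unfolding one_mat_eq_diag_real_mat kron_diag_real_mat by simp
  qed
  fix r c assume "r < dim_row (diag_real_mat (m ^ n) (basis_energy m a n))"
    "c < dim_col (diag_real_mat (m ^ n) (basis_energy m a n))"
  then have rc: "r < m ^ n" "c < m ^ n"
    by simp_all
  have "ham_pow m (diag_real_mat m a) n $$ (r, c) =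
      (\<Sum>i<n. diag_real_mat (m ^ n) (\<lambda>r. a ((r div m ^ (n - 1 - i)) mod m)) $$ (r, c))"
    unfolding ham_pow_def using rc slot by simp
  also have "\<dots> = (\<Sum>i<n. if r = c then complex_of_real (a ((r div m ^ (n - Suc i)) mod m)) else 0)"
    using rc by (simp add: diag_real_mat_def)
  also have "\<dots> = (if r = c then complex_of_real (basis_energy m a n r) else 0)"
    unfolding basis_energy_def of_real_sum
    using sum.nat_diff_reindex[of "\<lambda>j. complex_of_real (a ((r div m ^ j) mod m))" n]
    by (cases "r = c") simp_all
  finally show "ham_pow m (diag_real_mat m a) n $$ (r, c) = diag_real_mat (m ^ n) (basis_energy m a n) $$ (r, c)"
    using rc by (simp add: diag_real_mat_def)
qed (simp_all add: ham_pow_def)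

definition type_energies :: "nat \<Rightarrow> (nat \<Rightarrow> real) \<Rightarrow> nat \<Rightarrow> real set" where
  "type_energies m a n = (\<lambda>t. \<Sum>x<m. a x * real (t x)) ` (\<Pi>\<^sub>E x\<in>{..<m}. {..n})"

lemma finite_type_energies: "finite (type_energies m a n)"
  by (simp add: type_energies_def finite_PiE)

lemma card_type_energies_le: "card (type_energies m a n) \<le> (n + 1) ^ m"
proof -
  have "card (type_energies m a n) \<le> card (\<Pi>\<^sub>E x\<in>{..<m}. {..n})"
    unfolding type_energies_def by (rule card_image_le) (simp add: finite_PiE)
  also have "\<dots> = (n + 1) ^ m"
    by (simp add: card_PiE)
  finally show ?thesis .
qed

lemma basis_energy_in_type_energies:
  assumes "m > 0"
  shows "basis_energy m a n r \<in> type_energies m a n"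
proof -
  define digit where "digit j = (r div m ^ j) mod m" for j
  define t where "t = (\<lambda>x\<in>{..<m}. card {j \<in> {..<n}. digit j = x})"
  have "t \<in> (\<Pi>\<^sub>E x\<in>{..<m}. {..n})"
    unfolding t_def using card_mono[of "{..<n}" "{j \<in> {..<n}. digit j = _}"] by auto
  moreover have "basis_energy m a n r = (\<Sum>x<m. \<Sum>j\<in>{j \<in> {..<n}. digit j = x}. a (digit j))"
    unfolding basis_energy_def digit_def[symmetric]
    by (rule sum.group[symmetric]) (use assms in \<open>auto simp: digit_def\<close>)
  then have "basis_energy m a n r = (\<Sum>x<m. a x * real (t x))"
    by (simp add: t_def mult.commute)
  ultimately show ?thesis
    unfolding type_energies_def by blast
qed

lemma ham_pow_eigenvector_decomposition:
  assumes "m > 0" and v: "v \<in> carrier_vec (m ^ n)"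
  shows "\<exists>k e c. k \<le> (n + 1) ^ m \<and>
    (\<forall>j<k. \<exists>ev. eigenvector (ham_pow m (diag_real_mat m a) n) (e j) ev) \<and>
    (\<forall>i<m ^ n. v $ i = (\<Sum>j<k. c j * e j $ i))"
proof -
  have "\<exists>k e c. k \<le> card (type_energies m a n) \<and>
      (\<forall>j<k. \<exists>ev. eigenvector (diag_real_mat (m ^ n) (basis_energy m a n)) (e j) ev) \<and>
      (\<forall>i<m ^ n. v $ i = (\<Sum>j<k. c j * e j $ i))"
    by (rule diag_real_mat_eigenvector_decomposition[OF v])
      (simp_all add: basis_energy_in_type_energies[OF \<open>m > 0\<close>] finite_type_energies)
  then obtain k e c where "k \<le> card (type_energies m a n)"
    and "\<forall>j<k. \<exists>ev. eigenvector (diag_real_mat (m ^ n) (basis_energy m a n)) (e j) ev"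
    and "\<forall>i<m ^ n. v $ i = (\<Sum>j<k. c j * e j $ i)"
    by blast
  then show ?thesis
    unfolding ham_pow_diag_real_mat[OF \<open>m > 0\<close>] using card_type_energies_le[of m a n]
    by (intro exI[of _ k] exI[of _ e] exI[of _ c]) auto
qed

section \<open>Energy statistics of a product state\<close>

lemma sum_lessThan_mult_split:
  fixes f :: "nat \<Rightarrow> 'a :: comm_monoid_add"
  shows "(\<Sum>r<k * m. f r) = (\<Sum>q<k. \<Sum>d<m. f (q * m + d))"
proof -
  have "sum f {q * m..<q * m + m} = (\<Sum>d<m. f (q * m + d))" for q
    using sum.shift_bounds_nat_ivl[of f 0 "q * m" m] by (simp add: atLeast0LessThan add.commute)
  then show ?thesis
    using sum.nat_group[of f m k] by simp
qed

lemma weighted_chebyshev: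
  fixes w f :: "'a \<Rightarrow> real"
  assumes "finite R" and w: "\<And>r. r \<in> R \<Longrightarrow> 0 \<le> w r" and "t > 0"
  shows "(\<Sum>r\<in>{r \<in> R. t < \<bar>f r - c\<bar>}. w r) \<le> (\<Sum>r\<in>R. w r * (f r - c)\<^sup>2) / t\<^sup>2"
proof -
  have "(\<Sum>r\<in>{r \<in> R. t < \<bar>f r - c\<bar>}. w r) \<le> (\<Sum>r\<in>{r \<in> R. t < \<bar>f r - c\<bar>}. w r * (f r - c)\<^sup>2 / t\<^sup>2)"
  proof (rule sum_mono)
    fix r assume r: "r \<in> {r \<in> R. t < \<bar>f r - c\<bar>}"
    then have "t\<^sup>2 < \<bar>f r - c\<bar>\<^sup>2"
      using \<open>t > 0\<close> by (intro power_strict_mono) auto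
    then have "t\<^sup>2 < (f r - c)\<^sup>2"
      by simp
    then have "1 \<le> (f r - c)\<^sup>2 / t\<^sup>2"
      using \<open>t > 0\<close> by simp
    then show "w r \<le> w r * (f r - c)\<^sup>2 / t\<^sup>2"
      using w[of r] r mult_left_mono[of 1 "(f r - c)\<^sup>2 / t\<^sup>2" "w r"] by simp
  qed
  also have "\<dots> \<le> (\<Sum>r\<in>R. w r * (f r - c)\<^sup>2 / t\<^sup>2)"
    by (rule sum_mono2) (use \<open>finite R\<close> w in auto)
  finally show ?thesis
    by (simp add: sum_divide_distrib)
qed

locale product_state =
  fixes m :: nat and a :: "nat \<Rightarrow> real" and psi :: "complex vec"
  assumes psi_unit: "unit_vec_c m psi" and a_nonneg: "\<And>x. x < m \<Longrightarrow> 0 \<le> a x"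
begin

definition prob :: "nat \<Rightarrow> real" where
  "prob x = (cmod (psi $ x))\<^sup>2"

definition weight :: "nat \<Rightarrow> nat \<Rightarrow> real" where
  "weight n r = (cmod (kron_vec_pow psi n $ r))\<^sup>2"

definition mean :: real where
  "mean = (\<Sum>x<m. prob x * a x)"

definition variance :: real where
  "variance = (\<Sum>x<m. prob x * (a x - mean)\<^sup>2)"

definition total :: real where
  "total = (\<Sum>x<m. a x)"

abbreviation energy :: "nat \<Rightarrow> nat \<Rightarrow> real" where
  "energy \<equiv> basis_energy m a"

lemma dim_psi [simp]: "dim_vec psi = m"
  using psi_unit by (simp add: unit_vec_c_def)

lemma sum_prob: "(\<Sum>x<m. prob x) = 1"
proof -
  have "complex_of_real (\<Sum>x<m. prob x) = 1"
    using psi_unit unfolding unit_vec_c_def cinner_self_eq prob_def by simp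
  then show ?thesis
    by (simp only: of_real_eq_1_iff)
qed

lemma m_pos: "m > 0"
  using sum_prob by (cases m) auto

lemma weight_nonneg: "0 \<le> weight n r"
  by (simp add: weight_def)

lemma sum_weight_Suc:
  "(\<Sum>r<m ^ Suc n. weight (Suc n) r * g (r div m) (r mod m)) =
    (\<Sum>q<m ^ n. weight n q * (\<Sum>d<m. prob d * g q d))"
proof -
  have "weight (Suc n) (q * m + d) = weight n q * prob d" if "q < m ^ n" "d < m" for q d
  proof -
    have "q * m + d < (q + 1) * m"
      using that by simp
    also have "\<dots> \<le> m ^ n * m"
      using that by (intro mult_right_mono) auto
    also have "\<dots> = m ^ Suc n"
      by (simp add: mult.commute)
    finally show ?thesis
      unfolding weight_def prob_def using kron_vec_pow_Suc_index[of "q * m + d" psi n] that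
      by (simp add: norm_mult power_mult_distrib)
  qed
  note weight_Suc = this
  have "(\<Sum>r<m ^ Suc n. weight (Suc n) r * g (r div m) (r mod m)) =
      (\<Sum>q<m ^ n. \<Sum>d<m. weight (Suc n) (q * m + d) * g ((q * m + d) div m) ((q * m + d) mod m))"
    unfolding power_Suc2 sum_lessThan_mult_split ..
  also have "\<dots> = (\<Sum>q<m ^ n. \<Sum>d<m. weight n q * (prob d * g q d))"
    using m_pos by (intro sum.cong refl) (simp add: weight_Suc)
  finally show ?thesis
    by (simp add: sum_distrib_left)
qed

lemma sum_weight: "(\<Sum>r<m ^ n. weight n r) = 1"
proof (induction n)
  case (Suc n)
  then show ?case
    using sum_weight_Suc[of n "\<lambda>_ _. 1"] sum_prob by simp
qed (simp add: weight_def)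

lemma kron_vec_pow_unit: "unit_vec_c (m ^ n) (kron_vec_pow psi n)"
proof -
  have dim: "dim_vec (kron_vec_pow psi n) = m ^ n"
    by simp
  have "cinner (kron_vec_pow psi n) (kron_vec_pow psi n) = complex_of_real (\<Sum>r<m ^ n. weight n r)"
    unfolding cinner_self_eq dim weight_def ..
  then have "cinner (kron_vec_pow psi n) (kron_vec_pow psi n) = 1"
    by (simp only: sum_weight of_real_1)
  with dim show ?thesis
    unfolding unit_vec_c_def carrier_vec_def by blast
qed

lemma variance_energy: "(\<Sum>r<m ^ n. weight n r * (energy n r - n * mean)\<^sup>2) = n * variance"
proof (induction n)
  case (Suc n)
  have centered: "(\<Sum>d<m. prob d * (a d - mean)) = 0"
    by (simp add: algebra_simps sum_subtractf mean_def sum_prob flip: sum_distrib_right)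
  have "(\<Sum>d<m. prob d * (y + (a d - mean))\<^sup>2) = y\<^sup>2 + variance" for y
  proof -
    have "(\<Sum>d<m. prob d * (y + (a d - mean))\<^sup>2) =
        (\<Sum>d<m. y\<^sup>2 * prob d + (2 * y) * (prob d * (a d - mean)) + prob d * (a d - mean)\<^sup>2)"
      by (intro sum.cong refl) (simp add: power2_eq_square algebra_simps)
    then show ?thesis
      by (simp add: sum.distrib sum_prob centered variance_def flip: sum_distrib_left)
  qed
  note shift = this
  have "(\<Sum>r<m ^ Suc n. weight (Suc n) r * (energy (Suc n) r - Suc n * mean)\<^sup>2) =
      (\<Sum>r<m ^ Suc n. weight (Suc n) r * ((energy n (r div m) - n * mean) + (a (r mod m) - mean))\<^sup>2)"
    by (intro sum.cong refl) (simp add: basis_energy_Suc algebra_simps)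
  also have "\<dots> = (\<Sum>q<m ^ n. weight n q * (\<Sum>d<m. prob d * ((energy n q - n * mean) + (a d - mean))\<^sup>2))"
    by (rule sum_weight_Suc)
  also have "\<dots> = (\<Sum>q<m ^ n. weight n q * (energy n q - n * mean)\<^sup>2) + (\<Sum>q<m ^ n. weight n q) * variance"
    by (simp add: shift distrib_left sum.distrib sum_distrib_right)
  finally show ?case
    using Suc sum_weight by (simp add: algebra_simps)
qed simp

lemma a_le_total: "x < m \<Longrightarrow> a x \<le> total"
  unfolding total_def by (rule member_le_sum) (use a_nonneg in auto)

lemma total_nonneg: "0 \<le> total"
  unfolding total_def using a_nonneg by (auto intro: sum_nonneg)

lemma mean_bounds: "0 \<le> mean" "mean \<le> total"
proof -
  have "mean \<le> (\<Sum>x<m. prob x * total)"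
    unfolding mean_def using a_le_total by (intro sum_mono mult_left_mono) (auto simp: prob_def)
  then show "mean \<le> total"
    by (simp add: sum_prob flip: sum_distrib_right)
  show "0 \<le> mean"
    unfolding mean_def using a_nonneg by (auto simp: prob_def intro!: sum_nonneg)
qed

lemma variance_le: "variance \<le> total\<^sup>2"
proof -
  have "(a x - mean)\<^sup>2 \<le> total\<^sup>2" if "x < m" for x
    using a_le_total[OF that] a_nonneg[OF that] mean_bounds by (intro power2_le_iff_abs_le[THEN iffD2]) auto
  then have "variance \<le> (\<Sum>x<m. prob x * total\<^sup>2)"
    unfolding variance_def by (intro sum_mono mult_left_mono) (auto simp: prob_def)
  then show ?thesis
    by (simp add: sum_prob flip: sum_distrib_right)
qed

lemma energy_deviation_le: "\<bar>energy n r - n * mean\<bar> \<le> n * total"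
proof -
  have "0 \<le> energy n r"
    unfolding basis_energy_def using a_nonneg m_pos by (intro sum_nonneg) simp
  have "energy n r \<le> (\<Sum>j<n. total)"
    unfolding basis_energy_def using a_le_total m_pos by (intro sum_mono) simp
  then have "energy n r \<le> n * total"
    by simp
  moreover have "0 \<le> n * mean" "n * mean \<le> n * total"
    using mean_bounds by (simp_all add: mult_left_mono)
  ultimately show ?thesis
    using \<open>0 \<le> energy n r\<close> by (simp add: abs_le_iff)
qed

end

section \<open>The typical vector\<close>

locale typical_subspace = product_state +
  fixes \<alpha> :: real
  assumes alpha_gt: "1 / 2 < \<alpha>"
begin

definition typical :: "nat \<Rightarrow> nat set" where
  "typical n = {r. r < m ^ n \<and> \<bar>energy n r - n * mean\<bar> \<le> real n powr \<alpha> * total}"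

definition typical_weight :: "nat \<Rightarrow> real" where
  "typical_weight n = (\<Sum>r\<in>typical n. weight n r)"

(* The normalisation never divides by zero: see typical_weight_pos. *)
definition typical_vec :: "nat \<Rightarrow> complex vec" where
  "typical_vec n = vec (m ^ n) (\<lambda>r. if r \<in> typical n
     then kron_vec_pow psi n $ r / complex_of_real (sqrt (typical_weight n)) else 0)"

lemma typical_subset: "typical n \<subseteq> {..<m ^ n}"
  by (auto simp: typical_def)

lemma typical_weight_eq_1:
  assumes "total = 0 \<or> n \<le> 1"
  shows "typical_weight n = 1"
proof -
  have "real n * total \<le> real n powr \<alpha> * total"
    using assms by (auto simp: le_Suc_eq)
  then have "typical n = {..<m ^ n}"
    by (auto simp: typical_def intro: order_trans[OF energy_deviation_le])
  then show ?thesis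
    unfolding typical_weight_def using sum_weight by simp
qed

lemma typical_weight_le_1: "typical_weight n \<le> 1"
proof -
  have "typical_weight n \<le> (\<Sum>r<m ^ n. weight n r)"
    unfolding typical_weight_def using typical_subset weight_nonneg by (intro sum_mono2) auto
  then show ?thesis
    using sum_weight by simp
qed

lemma atypical_weight_le:
  assumes "1 \<le> n"
  shows "1 - typical_weight n \<le> real n powr (1 - 2 * \<alpha>)"
proof (cases "total = 0")
  case True
  then show ?thesis
    using typical_weight_eq_1 by simp
next
  case False
  then have "total > 0"
    using total_nonneg by simp
  define t where "t = real n powr \<alpha> * total"
  have "t > 0"
    using assms \<open>total > 0\<close> by (simp add: t_def)
  have atypical: "{..<m ^ n} - typical n = {r \<in> {..<m ^ n}. t < \<bar>energy n r - n * mean\<bar>}"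
    by (auto simp: typical_def t_def)
  have "1 - typical_weight n = (\<Sum>r\<in>{r \<in> {..<m ^ n}. t < \<bar>energy n r - n * mean\<bar>}. weight n r)"
    unfolding typical_weight_def atypical[symmetric] sum_diff[OF finite_lessThan typical_subset] sum_weight ..
  also have "\<dots> \<le> (\<Sum>r<m ^ n. weight n r * (energy n r - n * mean)\<^sup>2) / t\<^sup>2"
    using \<open>t > 0\<close> weight_nonneg by (intro weighted_chebyshev) auto
  also have "\<dots> \<le> n * total\<^sup>2 / t\<^sup>2"
    unfolding variance_energy using variance_le by (simp add: divide_right_mono mult_left_mono)
  also have "t\<^sup>2 = real n powr (2 * \<alpha>) * total\<^sup>2"
    unfolding t_def by (simp add: power_mult_distrib power2_eq_square flip: powr_add)
  also have "n * total\<^sup>2 / (real n powr (2 * \<alpha>) * total\<^sup>2) = real n / real n powr (2 * \<alpha>)"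
    using \<open>total > 0\<close> by simp
  also have "\<dots> = real n powr (1 - 2 * \<alpha>)"
    using assms by (simp add: powr_diff)
  finally show ?thesis .
qed

lemma typical_weight_pos: "0 < typical_weight n"
proof (cases "n \<le> 1")
  case True
  then show ?thesis
    using typical_weight_eq_1 by simp
next
  case False
  then have "real n powr (1 - 2 * \<alpha>) < 1"
    using alpha_gt by (intro powr_less_one) auto
  then show ?thesis
    using atypical_weight_le[of n] False by simp
qed

lemma typical_vec_unit: "unit_vec_c (m ^ n) (typical_vec n)"
proof -
  have "(\<Sum>r<m ^ n. (cmod (typical_vec n $ r))\<^sup>2) = (\<Sum>r<m ^ n. if r \<in> typical n then weight n r / typical_weight n else 0)"
    using typical_weight_pos[of n]
    by (intro sum.cong refl) (auto simp: typical_vec_def weight_def norm_divide power_divide)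
  also have "\<dots> = (\<Sum>r\<in>typical n. weight n r / typical_weight n)"
    using typical_subset by (simp add: sum.inter_restrict[symmetric] Int_absorb1)
  also have "\<dots> = 1"
    using typical_weight_pos[of n] by (simp add: typical_weight_def flip: sum_divide_distrib)
  finally have "(\<Sum>r<m ^ n. (cmod (typical_vec n $ r))\<^sup>2) = 1" .
  moreover have "dim_vec (typical_vec n) = m ^ n"
    by (simp add: typical_vec_def)
  ultimately show ?thesis
    unfolding unit_vec_c_def cinner_self_eq carrier_vec_def by simp
qed

lemma cinner_kron_vec_pow_typical_vec:
  "cinner (kron_vec_pow psi n) (typical_vec n) = complex_of_real (sqrt (typical_weight n))"
proof -
  have "cinner (kron_vec_pow psi n) (typical_vec n) =
      (\<Sum>r<m ^ n. if r \<in> typical n then complex_of_real (weight n r / sqrt (typical_weight n)) else 0)"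
    unfolding cinner_def
  proof (intro sum.cong)
    fix r assume "r \<in> {..<m ^ n}"
    moreover have "cnj z * z = complex_of_real ((cmod z)\<^sup>2)" for z
      by (metis complex_norm_square mult.commute)
    ultimately show "cnj (kron_vec_pow psi n $ r) * typical_vec n $ r =
        (if r \<in> typical n then complex_of_real (weight n r / sqrt (typical_weight n)) else 0)"
      by (auto simp: typical_vec_def weight_def)
  qed (simp add: typical_vec_def)
  also have "\<dots> = complex_of_real (typical_weight n / sqrt (typical_weight n))"
    using typical_subset
    by (simp add: sum.inter_restrict[symmetric] Int_absorb1 typical_weight_def sum_divide_distrib)
  also have "\<dots> = complex_of_real (sqrt (typical_weight n))"
    using typical_weight_pos[of n] by (simp add: real_div_sqrt)
  finally show ?thesis .
qed

lemma trace_norm_typical_vec: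
  "trace_norm (kron_pow (outer psi) n - outer (typical_vec n)) = 2 * sqrt (1 - typical_weight n)"
  using trace_norm_outer_diff[OF kron_vec_pow_unit typical_vec_unit, of n]
    typical_weight_pos[of n] typical_weight_le_1[of n] m_pos
  by (simp add: kron_pow_outer cinner_kron_vec_pow_typical_vec)

lemma trace_norm_typical_vec_tendsto:
  "(\<lambda>n. trace_norm (kron_pow (outer psi) n - outer (typical_vec n))) \<longlonglongrightarrow> 0"
proof (rule tendsto_sandwich[of "\<lambda>_. 0" _ _ "\<lambda>n. 2 * sqrt (real n powr (1 - 2 * \<alpha>))"])
  show "\<forall>\<^sub>F n in sequentially. 0 \<le> trace_norm (kron_pow (outer psi) n - outer (typical_vec n))"
    using typical_weight_le_1 by (simp add: trace_norm_typical_vec)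
  show "\<forall>\<^sub>F n in sequentially.
      trace_norm (kron_pow (outer psi) n - outer (typical_vec n)) \<le> 2 * sqrt (real n powr (1 - 2 * \<alpha>))"
    using atypical_weight_le by (intro eventually_sequentiallyI[of 1]) (simp add: trace_norm_typical_vec)
  have "(\<lambda>n. real n powr (1 - 2 * \<alpha>)) \<longlonglongrightarrow> 0"
    using alpha_gt by (intro tendsto_neg_powr filterlim_real_sequentially) auto
  then show "(\<lambda>n. 2 * sqrt (real n powr (1 - 2 * \<alpha>))) \<longlonglongrightarrow> 0"
    using tendsto_mult_left_zero tendsto_real_sqrt by fastforce
qed simp

lemma energy_spread_typical_vec_le:
  "energy_spread (ham_pow m (diag_real_mat m a) n) (typical_vec n) \<le> 2 * (real n powr \<alpha> * total)"
  unfolding ham_pow_diag_real_mat[OF m_pos]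
proof (rule energy_spread_diag_real_mat_le)
  show "typical_vec n \<in> carrier_vec (m ^ n)" "typical_vec n \<noteq> 0\<^sub>v (m ^ n)"
    using typical_vec_unit unit_vec_c_nonzero by (auto simp: unit_vec_c_def)
  show "\<bar>energy n r - n * mean\<bar> \<le> real n powr \<alpha> * total" if "r < m ^ n" "typical_vec n $ r \<noteq> 0" for r
    using that by (auto simp: typical_vec_def typical_def split: if_splits)
qed

end

theorem lemma6:
  fixes m :: nat and a :: "nat \<Rightarrow> real" and psi :: "complex vec" and \<alpha> :: real
  assumes a_nonneg: "\<And>x. x < m \<Longrightarrow> a x \<ge> 0"
    and psi_unit: "unit_vec_c m psi"
    and alpha: "1/2 < \<alpha>" "\<alpha> < 1"
  defines "HA \<equiv> mat m m (\<lambda>(i,j). if i = j then complex_of_real (a i) else 0)"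
  shows "\<exists>chi :: nat \<Rightarrow> complex vec.
     (\<forall>n. unit_vec_c (m ^ n) (chi n)) \<and>
     (\<lambda>n. trace_norm (kron_pow (outer psi) n - outer (chi n))) \<longlonglongrightarrow> 0 \<and>
     (\<forall>n. \<exists>k e c. k \<le> (n + 1) ^ m \<and>
          (\<forall>j<k. \<exists>ev. eigenvector (ham_pow m HA n) (e j) ev) \<and>
          (\<forall>i<m ^ n. chi n $ i = (\<Sum>j<k. c j * e j $ i))) \<and>
     (\<forall>n. energy_spread (ham_pow m HA n) (chi n) \<le> 4 * real n powr \<alpha> * (\<Sum>x<m. a x))"
proof -
  interpret typical_subspace m a psi \<alpha>
    using a_nonneg psi_unit alpha by unfold_locales auto
  have HA: "HA = diag_real_mat m a"
    unfolding HA_def diag_real_mat_def ..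
  have "energy_spread (ham_pow m HA n) (typical_vec n) \<le> 4 * real n powr \<alpha> * (\<Sum>x<m. a x)" for n
  proof -
    have "0 \<le> real n powr \<alpha> * total"
      using total_nonneg by simp
    then show ?thesis
      using energy_spread_typical_vec_le[of n] unfolding HA total_def by simp
  qed
  moreover have "typical_vec n \<in> carrier_vec (m ^ n)" for n
    using typical_vec_unit by (simp add: unit_vec_c_def)
  ultimately show ?thesis
    unfolding HA
    using typical_vec_unit trace_norm_typical_vec_tendsto ham_pow_eigenvector_decomposition[OF m_pos]
    by (intro exI[of _ typical_vec]) blast
qed

end
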